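(* Let $J\in\{1/2,1,3/2,\dots\}$, $M=2J$, $\Delta>M$, let $\mathcal{G}=(\mathcal{V},\mathcal{E})$ be a finite connected graph and $x,y\in\mathcal{V}$ distinct. Then, as operators on $\bigotimes_{z\in\mathcal{V}}\mathbb{C}^{M+1}$, $$-\frac{2J}{\Delta}(J^2-S_x^3S_y^3)\le-\frac{1}{2\Delta}(S_x^+S_y^-+S_x^-S_y^+)\le\frac{2J}{\Delta}(J^2-S_x^3S_y^3)$$ and $$\Big(1-\frac{2J}{\Delta}\Big)(J^2-S_x^3S_y^3)\le h_{xy}\le\Big(1+\frac{2J}{\Delta}\Big)(J^2-S_x^3S_y^3)\le\frac{M}{2}\Big(1+\frac{M}{\Delta}\Big)(\mathcal{N}_x^{loc}+\mathcal{N}_y^{loc}).$$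
   Context: $\mathbb{C}^{M+1}$ has orthonormal basis $\{\delta_j\}_{j=-J}^{J}$; $S^-\delta_j=\sqrt{J(J+1)-j(j-1)}\,\delta_{j-1}$ ($j>-J$), $S^-\delta_{-J}=0$; $S^+\delta_j=\sqrt{J(J+1)-j(j+1)}\,\delta_{j+1}$ ($j<J$), $S^+\delta_J=0$; $S^3\delta_j=j\delta_j$. For an operator $A$ on $\mathbb{C}^{M+1}$, $A_x$ acts as $A$ on the tensor factor at $x$ and as identity elsewhere. $h_{xy}=J^2-\frac{1}{2\Delta}(S_x^+S_y^-+S_x^-S_y^+)-S_x^3S_y^3$ and $\mathcal{N}^{loc}=J-S^3$ (local particle number operator). *)

theory Defs
  imports Complex_Main
begin

text \<open>The local space C^(M+1) has
basis delta_j, j = -J..J; we label delta_j by k = j + J in {0..M}. The tensor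
product over the vertex set is identified with functions on configurations
sigma : 'v => nat with sigma z <= M for all z (finite since 'v is finite).
Operators are kernels (matrices) indexed by configurations.\<close>

definition spinJ :: "nat \<Rightarrow> real" where
  "spinJ M = real M / 2"

type_synonym 'v config = "'v \<Rightarrow> nat"
type_synonym 'v op = "'v config \<Rightarrow> 'v config \<Rightarrow> complex"
type_synonym lop = "nat \<Rightarrow> nat \<Rightarrow> complex"

definition conf :: "nat \<Rightarrow> 'v config set" where
  "conf M = {\<sigma>. \<forall>z. \<sigma> z \<le> M}"

text \<open>Local operators as matrices: A k l = <delta_k, A delta_l>, with j = l - J.\<close>

definition lid :: "nat \<Rightarrow> lop" where
  "lid M k l = (if k = l \<and> l \<le> M then 1 else 0)"

definition S3 :: "nat \<Rightarrow> lop" where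
  "S3 M k l = (if k = l \<and> l \<le> M then complex_of_real (real l - spinJ M) else 0)"

definition Splus :: "nat \<Rightarrow> lop" where
  "Splus M k l = (if l < M \<and> k = l + 1 then
     (let J = spinJ M; j = real l - J in complex_of_real (sqrt (J*(J+1) - j*(j+1)))) else 0)"

definition Sminus :: "nat \<Rightarrow> lop" where
  "Sminus M k l = (if 0 < l \<and> l \<le> M \<and> k = l - 1 then
     (let J = spinJ M; j = real l - J in complex_of_real (sqrt (J*(J+1) - j*(j-1)))) else 0)"

definition Nloc :: "nat \<Rightarrow> lop" where
  "Nloc M k l = complex_of_real (spinJ M) * lid M k l - S3 M k l"

definition at_site :: "lop \<Rightarrow> 'v \<Rightarrow> 'v op" where
  "at_site A x \<sigma> \<tau> = (if (\<forall>z. z \<noteq> x \<longrightarrow> \<sigma> z = \<tau> z) then A (\<sigma> x) (\<tau> x) else 0)"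

definition op_id :: "nat \<Rightarrow> 'v op" where
  "op_id M \<sigma> \<tau> = (if \<sigma> = \<tau> \<and> \<sigma> \<in> conf M then 1 else 0)"

definition op_mult :: "nat \<Rightarrow> 'v op \<Rightarrow> 'v op \<Rightarrow> 'v op" where
  "op_mult M A B \<sigma> \<tau> = (\<Sum>\<rho>\<in>conf M. A \<sigma> \<rho> * B \<rho> \<tau>)"

definition op_scale :: "complex \<Rightarrow> 'v op \<Rightarrow> 'v op" where
  "op_scale c A \<sigma> \<tau> = c * A \<sigma> \<tau>"

definition op_add :: "'v op \<Rightarrow> 'v op \<Rightarrow> 'v op" where
  "op_add A B \<sigma> \<tau> = A \<sigma> \<tau> + B \<sigma> \<tau>"

definition op_sub :: "'v op \<Rightarrow> 'v op \<Rightarrow> 'v op" where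
  "op_sub A B \<sigma> \<tau> = A \<sigma> \<tau> - B \<sigma> \<tau>"

definition qform :: "nat \<Rightarrow> 'v op \<Rightarrow> ('v config \<Rightarrow> complex) \<Rightarrow> complex" where
  "qform M A \<psi> = (\<Sum>\<sigma>\<in>conf M. \<Sum>\<tau>\<in>conf M. cnj (\<psi> \<sigma>) * A \<sigma> \<tau> * \<psi> \<tau>)"

definition op_le :: "nat \<Rightarrow> 'v op \<Rightarrow> 'v op \<Rightarrow> bool" where
  "op_le M A B \<longleftrightarrow> (\<forall>\<psi>. Im (qform M (op_sub B A) \<psi>) = 0 \<and> Re (qform M (op_sub B A) \<psi>) \<ge> 0)"

definition hop :: "nat \<Rightarrow> real \<Rightarrow> 'v \<Rightarrow> 'v \<Rightarrow> 'v op" where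
  "hop M \<Delta> x y = op_scale (complex_of_real (- 1 / (2 * \<Delta>)))
      (op_add (op_mult M (at_site (Splus M) x) (at_site (Sminus M) y))
       (op_mult M (at_site (Sminus M) x) (at_site (Splus M) y)))"

definition zzterm :: "nat \<Rightarrow> 'v \<Rightarrow> 'v \<Rightarrow> 'v op" where
  "zzterm M x y = op_sub (op_scale (complex_of_real ((spinJ M)^2)) (op_id M))
      (op_mult M (at_site (S3 M) x) (at_site (S3 M) y))"

definition hxy :: "nat \<Rightarrow> real \<Rightarrow> 'v \<Rightarrow> 'v \<Rightarrow> 'v op" where
  "hxy M \<Delta> x y = op_sub (op_add (op_scale (complex_of_real ((spinJ M)^2)) (op_id M))
      (hop M \<Delta> x y))
      (op_mult M (at_site (S3 M) x) (at_site (S3 M) y))"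

definition connected_graph :: "('v \<Rightarrow> 'v \<Rightarrow> bool) \<Rightarrow> bool" where
  "connected_graph E \<longleftrightarrow> (\<forall>u v. E u v \<longrightarrow> E v u) \<and> (\<forall>u. \<not> E u u) \<and> (\<forall>u v. E\<^sup>*\<^sup>* u v)"

end

theory Submission
  imports Defs "HOL-Library.FuncSet"
begin

(* Label the basis of each site by k = j + J, so that N = M - k. Everything except the hopping
   term is diagonal in the product basis. The nonzero entries of S+_x S-_y connect \<sigma> with the
   configuration \<tau> obtained by lowering k_x and raising k_y by one, and equal
   sqrt (f \<sigma> * g \<tau>) with f = k_x (M - k_y) and g = (M - k_x) k_y. Since \<sigma> determines \<tau> and
   vice versa, AM-GM (a Schur test) bounds the quadratic form of S+_x S-_y by that of the
   diagonal operator (f + g)/2 = J^2 - S3_x S3_y. So the hopping term is even bounded by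
   (1/\<Delta>)(J^2 - S3_x S3_y), and 2J \<ge> 1. The last inequality is the pointwise identity
   (M/2)(N_x + N_y) - (J^2 - S3_x S3_y) = N_x N_y \<ge> 0. *)

lemma sqrt_mult_le_amgm:
  fixes f g p q :: real
  assumes "0 \<le> f" "0 \<le> g"
  shows "p * sqrt (f * g) * q \<le> (f * p\<^sup>2 + g * q\<^sup>2) / 2"
proof -
  have "0 \<le> (sqrt f * p - sqrt g * q)\<^sup>2" by simp
  then show ?thesis using assms by (simp add: power2_eq_square real_sqrt_mult algebra_simps)
qed

lemma sum_weighted_le:
  fixes w :: "'a \<Rightarrow> real"
  assumes "(\<Sum>\<tau>\<in>C. w \<tau>) \<le> 1" "0 \<le> a"
  shows "(\<Sum>\<tau>\<in>C. w \<tau> * a) \<le> a"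
  using mult_right_mono[OF assms] by (simp add: sum_distrib_right)

lemma norm_bilinear_sum_le_schur:
  fixes T :: "'a \<Rightarrow> 'a \<Rightarrow> complex" and w :: "'a \<Rightarrow> 'a \<Rightarrow> real" and f g :: "'a \<Rightarrow> real"
  assumes "finite C"
    and entry: "\<And>\<sigma> \<tau>. \<sigma> \<in> C \<Longrightarrow> \<tau> \<in> C \<Longrightarrow> cmod (T \<sigma> \<tau>) \<le> w \<sigma> \<tau> * sqrt (f \<sigma> * g \<tau>)"
    and w_nonneg: "\<And>\<sigma> \<tau>. \<sigma> \<in> C \<Longrightarrow> \<tau> \<in> C \<Longrightarrow> 0 \<le> w \<sigma> \<tau>"
    and f_nonneg: "\<And>\<sigma>. \<sigma> \<in> C \<Longrightarrow> 0 \<le> f \<sigma>"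
    and g_nonneg: "\<And>\<sigma>. \<sigma> \<in> C \<Longrightarrow> 0 \<le> g \<sigma>"
    and rows: "\<And>\<sigma>. \<sigma> \<in> C \<Longrightarrow> (\<Sum>\<tau>\<in>C. w \<sigma> \<tau>) \<le> 1"
    and cols: "\<And>\<tau>. \<tau> \<in> C \<Longrightarrow> (\<Sum>\<sigma>\<in>C. w \<sigma> \<tau>) \<le> 1"
  shows "cmod (\<Sum>\<sigma>\<in>C. \<Sum>\<tau>\<in>C. cnj (\<psi> \<sigma>) * T \<sigma> \<tau> * \<psi> \<tau>)
    \<le> (\<Sum>\<sigma>\<in>C. (f \<sigma> + g \<sigma>) / 2 * (cmod (\<psi> \<sigma>))\<^sup>2)"
proof -
  define n where "n \<sigma> = cmod (\<psi> \<sigma>)" for \<sigma>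
  define F where "F \<sigma> = f \<sigma> * (n \<sigma>)\<^sup>2 / 2" for \<sigma>
  define G where "G \<tau> = g \<tau> * (n \<tau>)\<^sup>2 / 2" for \<tau>
  have "cmod (\<Sum>\<sigma>\<in>C. \<Sum>\<tau>\<in>C. cnj (\<psi> \<sigma>) * T \<sigma> \<tau> * \<psi> \<tau>)
      \<le> (\<Sum>\<sigma>\<in>C. \<Sum>\<tau>\<in>C. cmod (cnj (\<psi> \<sigma>) * T \<sigma> \<tau> * \<psi> \<tau>))"
    by (rule order_trans[OF norm_sum sum_mono[OF norm_sum]])
  also have "\<dots> = (\<Sum>\<sigma>\<in>C. \<Sum>\<tau>\<in>C. n \<sigma> * cmod (T \<sigma> \<tau>) * n \<tau>)"
    by (simp add: norm_mult n_def)
  also have "\<dots> \<le> (\<Sum>\<sigma>\<in>C. \<Sum>\<tau>\<in>C. w \<sigma> \<tau> * F \<sigma> + w \<sigma> \<tau> * G \<tau>)"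
  proof (intro sum_mono)
    fix \<sigma> \<tau> assume \<sigma>: "\<sigma> \<in> C" and \<tau>: "\<tau> \<in> C"
    have "n \<sigma> * cmod (T \<sigma> \<tau>) * n \<tau> \<le> n \<sigma> * (w \<sigma> \<tau> * sqrt (f \<sigma> * g \<tau>)) * n \<tau>"
      using entry[OF \<sigma> \<tau>] by (intro mult_right_mono mult_left_mono) (auto simp: n_def)
    also have "\<dots> = w \<sigma> \<tau> * (n \<sigma> * sqrt (f \<sigma> * g \<tau>) * n \<tau>)"
      by (simp only: ac_simps)
    also have "\<dots> \<le> w \<sigma> \<tau> * (F \<sigma> + G \<tau>)"
    proof (rule mult_left_mono[OF _ w_nonneg[OF \<sigma> \<tau>]])
      show "n \<sigma> * sqrt (f \<sigma> * g \<tau>) * n \<tau> \<le> F \<sigma> + G \<tau>"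
        using sqrt_mult_le_amgm[OF f_nonneg[OF \<sigma>] g_nonneg[OF \<tau>], of "n \<sigma>" "n \<tau>"]
        by (simp add: F_def G_def add_divide_distrib)
    qed
    finally show "n \<sigma> * cmod (T \<sigma> \<tau>) * n \<tau> \<le> w \<sigma> \<tau> * F \<sigma> + w \<sigma> \<tau> * G \<tau>"
      by (simp add: distrib_left)
  qed
  also have "\<dots> = (\<Sum>\<sigma>\<in>C. \<Sum>\<tau>\<in>C. w \<sigma> \<tau> * F \<sigma>) + (\<Sum>\<tau>\<in>C. \<Sum>\<sigma>\<in>C. w \<sigma> \<tau> * G \<tau>)"
    by (simp add: sum.distrib) (rule sum.swap)
  also have "\<dots> \<le> (\<Sum>\<sigma>\<in>C. F \<sigma>) + (\<Sum>\<tau>\<in>C. G \<tau>)"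
    using rows cols f_nonneg g_nonneg
    by (intro add_mono sum_mono sum_weighted_le) (auto simp: F_def G_def)
  also have "\<dots> = (\<Sum>\<sigma>\<in>C. (f \<sigma> + g \<sigma>) / 2 * (cmod (\<psi> \<sigma>))\<^sup>2)"
    by (simp add: F_def G_def n_def sum.distrib[symmetric] add_divide_distrib distrib_right)
  finally show ?thesis .
qed

lemma finite_conf: "finite (conf M :: ('v::finite) config set)"
proof -
  have "conf M = PiE (UNIV::'v set) (\<lambda>_. {..M})"
    by (auto simp: conf_def PiE_def extensional_def)
  then show ?thesis by (simp add: finite_PiE)
qed

lemma qform_add: "qform M (op_add A B) \<psi> = qform M A \<psi> + qform M B \<psi>"
  by (simp add: qform_def op_add_def algebra_simps sum.distrib)

lemma qform_sub: "qform M (op_sub A B) \<psi> = qform M A \<psi> - qform M B \<psi>"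
  by (simp add: qform_def op_sub_def algebra_simps sum_subtractf)

lemma qform_scale: "qform M (op_scale c A) \<psi> = c * qform M A \<psi>"
  by (simp add: qform_def op_scale_def algebra_simps sum_distrib_left)

lemma qform_scale_of_real:
  "qform M A \<psi> = complex_of_real a \<Longrightarrow>
    qform M (op_scale (complex_of_real c) A) \<psi> = complex_of_real (c * a)"
  by (simp add: qform_scale)

lemma op_le_of_real_qforms:
  assumes "\<And>\<psi>. qform M A \<psi> = complex_of_real (a \<psi>)"
    and "\<And>\<psi>. qform M B \<psi> = complex_of_real (b \<psi>)"
    and "\<And>\<psi>. a \<psi> \<le> b \<psi>"
  shows "op_le M A B"
  using assms by (simp add: op_le_def qform_sub)

lemma qform_adjoint:
  assumes "\<And>\<sigma> \<tau>. \<sigma> \<in> conf M \<Longrightarrow> \<tau> \<in> conf M \<Longrightarrow> B \<sigma> \<tau> = cnj (A \<tau> \<sigma>)"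
  shows "qform M B \<psi> = cnj (qform M A \<psi>)"
proof -
  have "qform M B \<psi> = (\<Sum>\<sigma>\<in>conf M. \<Sum>\<tau>\<in>conf M. cnj (cnj (\<psi> \<tau>) * A \<tau> \<sigma> * \<psi> \<sigma>))"
    unfolding qform_def by (intro sum.cong refl) (simp add: assms)
  also have "\<dots> = cnj (qform M A \<psi>)"
    unfolding qform_def cnj_sum by (rule sum.swap)
  finally show ?thesis .
qed

definition diag_qform :: "nat \<Rightarrow> ('v config \<Rightarrow> real) \<Rightarrow> ('v config \<Rightarrow> complex) \<Rightarrow> real" where
  "diag_qform M d \<psi> = (\<Sum>\<sigma>\<in>conf M. d \<sigma> * (cmod (\<psi> \<sigma>))\<^sup>2)"

lemma qform_diagonal:
  fixes A :: "('v::finite) op"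
  assumes "\<And>\<sigma> \<tau>. \<sigma> \<in> conf M \<Longrightarrow> \<tau> \<in> conf M \<Longrightarrow>
    A \<sigma> \<tau> = (if \<sigma> = \<tau> then complex_of_real (d \<sigma>) else 0)"
  shows "qform M A \<psi> = complex_of_real (diag_qform M d \<psi>)"
proof -
  have "qform M A \<psi> = (\<Sum>\<sigma>\<in>conf M. cnj (\<psi> \<sigma>) * complex_of_real (d \<sigma>) * \<psi> \<sigma>)"
    unfolding qform_def by (simp add: assms finite_conf if_distrib if_distribR cong: if_cong)
  also have "\<dots> = (\<Sum>\<sigma>\<in>conf M. complex_of_real (d \<sigma> * (cmod (\<psi> \<sigma>))\<^sup>2))"
  proof (intro sum.cong refl)
    fix \<sigma>
    show "cnj (\<psi> \<sigma>) * complex_of_real (d \<sigma>) * \<psi> \<sigma> = complex_of_real (d \<sigma> * (cmod (\<psi> \<sigma>))\<^sup>2)"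
      using complex_norm_square[of "\<psi> \<sigma>"] by (simp add: algebra_simps)
  qed
  finally show ?thesis by (simp add: diag_qform_def)
qed

lemma diag_qform_mono:
  assumes "\<And>\<sigma>. \<sigma> \<in> conf M \<Longrightarrow> d \<sigma> \<le> e \<sigma>"
  shows "diag_qform M d \<psi> \<le> diag_qform M e \<psi>"
  unfolding diag_qform_def using assms by (intro sum_mono mult_right_mono) auto

lemma diag_qform_scale: "diag_qform M (\<lambda>\<sigma>. c * d \<sigma>) \<psi> = c * diag_qform M d \<psi>"
  by (simp add: diag_qform_def sum_distrib_left mult.assoc)

lemma op_mult_at_site_distinct:
  fixes x y :: "'v::finite"
  assumes "x \<noteq> y" "\<sigma> \<in> conf M" "\<tau> \<in> conf M"
  shows "op_mult M (at_site A x) (at_site B y) \<sigma> \<tau> =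
    (if \<forall>z. z \<noteq> x \<and> z \<noteq> y \<longrightarrow> \<sigma> z = \<tau> z then A (\<sigma> x) (\<tau> x) * B (\<sigma> y) (\<tau> y) else 0)"
proof -
  let ?\<rho> = "\<sigma>(x := \<tau> x)"
  have \<rho>: "?\<rho> \<in> conf M" using assms by (auto simp: conf_def)
  have "\<forall>\<rho>\<in>conf M - {?\<rho>}. at_site A x \<sigma> \<rho> * at_site B y \<rho> \<tau> = 0"
  proof
    fix \<rho> assume "\<rho> \<in> conf M - {?\<rho>}"
    then have "\<rho> \<noteq> ?\<rho>" by simp
    then obtain z where "\<rho> z \<noteq> ?\<rho> z" by (meson ext)
    then show "at_site A x \<sigma> \<rho> * at_site B y \<rho> \<tau> = 0"
      using assms(1) by (cases "z = x") (auto simp: at_site_def)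
  qed
  then have "op_mult M (at_site A x) (at_site B y) \<sigma> \<tau> = at_site A x \<sigma> ?\<rho> * at_site B y ?\<rho> \<tau>"
    unfolding op_mult_def by (subst sum.remove[OF finite_conf \<rho>]) (simp add: sum.neutral)
  then show ?thesis using assms(1) by (auto simp: at_site_def)
qed

lemma at_site_diagonal:
  assumes "\<And>k l. k \<le> M \<Longrightarrow> l \<le> M \<Longrightarrow> A k l = (if k = l then d k else 0)"
    and "\<sigma> \<in> conf M" "\<tau> \<in> conf M"
  shows "at_site A x \<sigma> \<tau> = (if \<sigma> = \<tau> then d (\<sigma> x) else 0)"
proof -
  have "(\<forall>z. z \<noteq> x \<longrightarrow> \<sigma> z = \<tau> z) \<and> \<sigma> x = \<tau> x \<longleftrightarrow> \<sigma> = \<tau>" by auto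
  moreover have "\<sigma> x \<le> M" "\<tau> x \<le> M" using assms(2,3) by (auto simp: conf_def)
  ultimately show ?thesis by (auto simp: at_site_def assms(1))
qed

lemma Splus_eq:
  "Splus M k l = (if l < M \<and> k = l + 1 then complex_of_real (sqrt ((real M - real l) * (real l + 1))) else 0)"
  by (simp add: Splus_def Let_def spinJ_def algebra_simps)

lemma Sminus_eq:
  "Sminus M k l = (if 0 < l \<and> l \<le> M \<and> k = l - 1 then complex_of_real (sqrt (real l * (real M + 1 - real l))) else 0)"
  by (simp add: Sminus_def Let_def spinJ_def algebra_simps)

lemma Sminus_eq_Splus_transpose: "Sminus M k l = Splus M l k"
  by (auto simp: Sminus_eq Splus_eq algebra_simps)

lemma cnj_Splus [simp]: "cnj (Splus M k l) = Splus M k l"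
  by (simp add: Splus_eq)

(* S+_x S-_y maps the basis vector of flip x y \<sigma> to a multiple of that of \<sigma>. *)
definition flip :: "'v \<Rightarrow> 'v \<Rightarrow> 'v config \<Rightarrow> 'v config" where
  "flip x y \<sigma> = \<sigma>(x := \<sigma> x - 1, y := \<sigma> y + 1)"

definition flip_weight :: "nat \<Rightarrow> 'v \<Rightarrow> 'v \<Rightarrow> 'v config \<Rightarrow> real" where
  "flip_weight M x y \<sigma> = real (\<sigma> x) * (real M - real (\<sigma> y))"

definition zz_diag :: "nat \<Rightarrow> 'v \<Rightarrow> 'v \<Rightarrow> 'v config \<Rightarrow> real" where
  "zz_diag M x y \<sigma> = (spinJ M)\<^sup>2 - (real (\<sigma> x) - spinJ M) * (real (\<sigma> y) - spinJ M)"

lemma flip_flip: "x \<noteq> y \<Longrightarrow> 0 < \<sigma> x \<Longrightarrow> flip y x (flip x y \<sigma>) = \<sigma>"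
  by (auto simp: flip_def)

lemma flip_weight_nonneg: "\<sigma> \<in> conf M \<Longrightarrow> 0 \<le> flip_weight M x y \<sigma>"
  by (simp add: flip_weight_def conf_def)

lemma flip_weight_add_flip_weight: "flip_weight M x y \<sigma> + flip_weight M y x \<sigma> = 2 * zz_diag M x y \<sigma>"
  by (simp add: flip_weight_def zz_diag_def spinJ_def power2_eq_square algebra_simps)

lemma zz_diag_le_Nloc_sum:
  "\<sigma> \<in> conf M \<Longrightarrow>
    zz_diag M x y \<sigma> \<le> real M / 2 * ((real M - real (\<sigma> x)) + (real M - real (\<sigma> y)))"
proof -
  assume "\<sigma> \<in> conf M"
  then have "0 \<le> (real M - real (\<sigma> x)) * (real M - real (\<sigma> y))" by (simp add: conf_def)
  then show ?thesis by (simp add: zz_diag_def spinJ_def algebra_simps power2_eq_square)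
qed

lemma diag_qform_zz_diag_le:
  "diag_qform M (zz_diag M x y) \<psi>
    \<le> real M / 2 * diag_qform M (\<lambda>\<sigma>. (real M - real (\<sigma> x)) + (real M - real (\<sigma> y))) \<psi>"
  unfolding diag_qform_scale[symmetric] by (rule diag_qform_mono) (rule zz_diag_le_Nloc_sum)

lemma hopping_kernel:
  fixes x y :: "'v::finite"
  assumes xy: "x \<noteq> y" and \<sigma>: "\<sigma> \<in> conf M" and \<tau>: "\<tau> \<in> conf M"
  shows "op_mult M (at_site (Splus M) x) (at_site (Sminus M) y) \<sigma> \<tau> =
    (if \<tau> = flip x y \<sigma> \<and> 0 < \<sigma> x
     then complex_of_real (sqrt (flip_weight M x y \<sigma> * flip_weight M y x \<tau>)) else 0)"
proof (cases "\<tau> = flip x y \<sigma> \<and> 0 < \<sigma> x")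
  case True
  have "\<sigma> x \<le> M" "\<tau> y \<le> M" using \<sigma> \<tau> by (auto simp: conf_def)
  with True xy have "Splus M (\<sigma> x) (\<tau> x) * Sminus M (\<sigma> y) (\<tau> y)
      = complex_of_real (sqrt ((real M - real (\<tau> x)) * real (\<sigma> x)) * sqrt (real (\<tau> y) * (real M - real (\<sigma> y))))"
    by (auto simp: Splus_eq Sminus_eq flip_def algebra_simps)
  also have "\<dots> = complex_of_real (sqrt (flip_weight M x y \<sigma> * flip_weight M y x \<tau>))"
    by (simp add: flip_weight_def real_sqrt_mult[symmetric] algebra_simps)
  finally show ?thesis
    unfolding op_mult_at_site_distinct[OF xy \<sigma> \<tau>] using True xy by (simp add: flip_def)
next
  case False
  have "\<not> ((\<forall>z. z \<noteq> x \<and> z \<noteq> y \<longrightarrow> \<sigma> z = \<tau> z)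
      \<and> Splus M (\<sigma> x) (\<tau> x) \<noteq> 0 \<and> Sminus M (\<sigma> y) (\<tau> y) \<noteq> 0)"
  proof
    assume nonzero: "(\<forall>z. z \<noteq> x \<and> z \<noteq> y \<longrightarrow> \<sigma> z = \<tau> z)
      \<and> Splus M (\<sigma> x) (\<tau> x) \<noteq> 0 \<and> Sminus M (\<sigma> y) (\<tau> y) \<noteq> 0"
    then have "\<tau> x = \<sigma> x - 1" "\<tau> y = \<sigma> y + 1" "0 < \<sigma> x"
      by (auto simp: Splus_eq Sminus_eq split: if_splits)
    with nonzero have "\<tau> = flip x y \<sigma>" by (intro ext) (auto simp: flip_def)
    with False \<open>0 < \<sigma> x\<close> show False by simp
  qed
  then show ?thesis
    unfolding op_mult_at_site_distinct[OF xy \<sigma> \<tau>] using False by auto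
qed

lemma cmod_qform_hopping_le:
  fixes x y :: "'v::finite"
  assumes xy: "x \<noteq> y"
  shows "cmod (qform M (op_mult M (at_site (Splus M) x) (at_site (Sminus M) y)) \<psi>)
    \<le> diag_qform M (zz_diag M x y) \<psi>"
proof -
  define w :: "'v config \<Rightarrow> 'v config \<Rightarrow> real"
    where "w \<sigma> \<tau> = (if \<tau> = flip x y \<sigma> \<and> 0 < \<sigma> x then 1 else 0)" for \<sigma> \<tau>
  have "cmod (qform M (op_mult M (at_site (Splus M) x) (at_site (Sminus M) y)) \<psi>)
      \<le> (\<Sum>\<sigma>\<in>conf M. (flip_weight M x y \<sigma> + flip_weight M y x \<sigma>) / 2 * (cmod (\<psi> \<sigma>))\<^sup>2)"
    unfolding qform_def
  proof (rule norm_bilinear_sum_le_schur[where w = w])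
    fix \<sigma> \<tau> :: "'v config"
    assume \<sigma>: "\<sigma> \<in> conf M" and \<tau>: "\<tau> \<in> conf M"
    have "0 \<le> sqrt (flip_weight M x y \<sigma> * flip_weight M y x \<tau>)"
      using flip_weight_nonneg[OF \<sigma>] flip_weight_nonneg[OF \<tau>] by simp
    then show "cmod (op_mult M (at_site (Splus M) x) (at_site (Sminus M) y) \<sigma> \<tau>)
        \<le> w \<sigma> \<tau> * sqrt (flip_weight M x y \<sigma> * flip_weight M y x \<tau>)"
      unfolding hopping_kernel[OF xy \<sigma> \<tau>] w_def by auto
  next
    fix \<sigma> :: "'v config"
    have "(\<Sum>\<tau>\<in>conf M. w \<sigma> \<tau>) \<le> (\<Sum>\<tau>\<in>conf M. if \<tau> = flip x y \<sigma> then 1 else 0)"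
      by (intro sum_mono) (simp add: w_def)
    then show "(\<Sum>\<tau>\<in>conf M. w \<sigma> \<tau>) \<le> 1"
      by (simp add: finite_conf split: if_splits)
  next
    fix \<tau> :: "'v config"
    have "(\<Sum>\<sigma>\<in>conf M. w \<sigma> \<tau>) \<le> (\<Sum>\<sigma>\<in>conf M. if \<sigma> = flip y x \<tau> then 1 else 0)"
      by (intro sum_mono) (auto simp: w_def flip_flip[OF xy])
    then show "(\<Sum>\<sigma>\<in>conf M. w \<sigma> \<tau>) \<le> 1"
      by (simp add: finite_conf split: if_splits)
  qed (simp_all add: finite_conf w_def flip_weight_nonneg)
  also have "\<dots> = diag_qform M (zz_diag M x y) \<psi>"
    by (simp add: flip_weight_add_flip_weight diag_qform_def)
  finally show ?thesis .
qed

lemma qform_hopping_adjoint: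
  fixes x y :: "'v::finite"
  assumes xy: "x \<noteq> y"
  shows "qform M (op_mult M (at_site (Sminus M) x) (at_site (Splus M) y)) \<psi>
    = cnj (qform M (op_mult M (at_site (Splus M) x) (at_site (Sminus M) y)) \<psi>)"
  by (rule qform_adjoint)
    (auto simp: op_mult_at_site_distinct[OF xy] Sminus_eq_Splus_transpose)

lemma qform_hop:
  fixes x y :: "'v::finite"
  assumes "x \<noteq> y"
  shows "qform M (hop M \<Delta> x y) \<psi>
    = complex_of_real (- Re (qform M (op_mult M (at_site (Splus M) x) (at_site (Sminus M) y)) \<psi>) / \<Delta>)"
  unfolding hop_def qform_scale qform_add qform_hopping_adjoint[OF assms] complex_add_cnj
  by (simp add: field_simps)

lemma cmod_qform_hop_le:
  fixes x y :: "'v::finite"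
  assumes xy: "x \<noteq> y" and M: "1 \<le> M" and \<Delta>: "0 < \<Delta>"
  shows "cmod (qform M (hop M \<Delta> x y) \<psi>) \<le> 2 * spinJ M / \<Delta> * diag_qform M (zz_diag M x y) \<psi>"
proof -
  let ?T = "op_mult M (at_site (Splus M) x) (at_site (Sminus M) y)"
  have Re_le: "\<bar>Re (qform M ?T \<psi>)\<bar> \<le> diag_qform M (zz_diag M x y) \<psi>"
    using abs_Re_le_cmod cmod_qform_hopping_le[OF xy] by (rule order_trans)
  also have "\<dots> \<le> real M * diag_qform M (zz_diag M x y) \<psi>"
    using mult_right_mono[of 1 "real M", OF _ order_trans[OF abs_ge_zero Re_le]] M by simp
  finally have "\<bar>Re (qform M ?T \<psi>)\<bar> / \<Delta> \<le> real M * diag_qform M (zz_diag M x y) \<psi> / \<Delta>"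
    using \<Delta> by (simp add: divide_right_mono)
  moreover have "cmod (qform M (hop M \<Delta> x y) \<psi>) = \<bar>Re (qform M ?T \<psi>)\<bar> / \<Delta>"
    unfolding qform_hop[OF xy] norm_of_real using \<Delta> by simp
  ultimately show ?thesis by (simp add: spinJ_def)
qed

lemma qform_zzterm:
  fixes x y :: "'v::finite"
  assumes xy: "x \<noteq> y"
  shows "qform M (zzterm M x y) \<psi> = complex_of_real (diag_qform M (zz_diag M x y) \<psi>)"
proof (rule qform_diagonal)
  fix \<sigma> \<tau> :: "'v config"
  assume \<sigma>: "\<sigma> \<in> conf M" and \<tau>: "\<tau> \<in> conf M"
  have "op_mult M (at_site (S3 M) x) (at_site (S3 M) y) \<sigma> \<tau>
      = (if \<sigma> = \<tau> then complex_of_real ((real (\<sigma> x) - spinJ M) * (real (\<sigma> y) - spinJ M)) else 0)"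
  proof -
    have "(\<forall>z. z \<noteq> x \<and> z \<noteq> y \<longrightarrow> \<sigma> z = \<tau> z) \<and> \<sigma> x = \<tau> x \<and> \<sigma> y = \<tau> y \<longleftrightarrow> \<sigma> = \<tau>"
      by auto
    moreover have "\<sigma> x \<le> M" "\<sigma> y \<le> M" using \<sigma> by (auto simp: conf_def)
    ultimately show ?thesis
      by (auto simp: op_mult_at_site_distinct[OF xy \<sigma> \<tau>] S3_def)
  qed
  then show "zzterm M x y \<sigma> \<tau> = (if \<sigma> = \<tau> then complex_of_real (zz_diag M x y \<sigma>) else 0)"
    using \<sigma> by (simp add: zzterm_def op_sub_def op_scale_def op_id_def zz_diag_def)
qed

lemma qform_hxy: "qform M (hxy M \<Delta> x y) \<psi> = qform M (zzterm M x y) \<psi> + qform M (hop M \<Delta> x y) \<psi>"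
  by (simp add: hxy_def zzterm_def qform_add qform_sub)

lemma qform_Nloc_sum:
  fixes x y :: "'v::finite"
  shows "qform M (op_add (at_site (Nloc M) x) (at_site (Nloc M) y)) \<psi>
    = complex_of_real (diag_qform M (\<lambda>\<sigma>. (real M - real (\<sigma> x)) + (real M - real (\<sigma> y))) \<psi>)"
proof (rule qform_diagonal)
  fix \<sigma> \<tau> :: "'v config"
  assume \<sigma>: "\<sigma> \<in> conf M" and \<tau>: "\<tau> \<in> conf M"
  have "Nloc M k l = (if k = l then complex_of_real (real M - real k) else 0)" if "l \<le> M" for k l
    using that by (simp add: Nloc_def lid_def S3_def spinJ_def)
  then show "op_add (at_site (Nloc M) x) (at_site (Nloc M) y) \<sigma> \<tau>
      = (if \<sigma> = \<tau> then complex_of_real ((real M - real (\<sigma> x)) + (real M - real (\<sigma> y))) else 0)"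
    by (simp add: op_add_def at_site_diagonal[OF _ \<sigma> \<tau>])
qed

theorem mainTheorem2:
  fixes M :: nat and \<Delta> :: real and E :: "'v::finite \<Rightarrow> 'v \<Rightarrow> bool" and x y :: 'v
  assumes "M \<ge> 1" and "\<Delta> > real M" and "connected_graph E" and "x \<noteq> y"
  shows "op_le M (op_scale (complex_of_real (- 2 * spinJ M / \<Delta>)) (zzterm M x y)) (hop M \<Delta> x y)
       \<and> op_le M (hop M \<Delta> x y) (op_scale (complex_of_real (2 * spinJ M / \<Delta>)) (zzterm M x y))
       \<and> op_le M (op_scale (complex_of_real (1 - 2 * spinJ M / \<Delta>)) (zzterm M x y)) (hxy M \<Delta> x y)
       \<and> op_le M (hxy M \<Delta> x y) (op_scale (complex_of_real (1 + 2 * spinJ M / \<Delta>)) (zzterm M x y))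
       \<and> op_le M (op_scale (complex_of_real (1 + 2 * spinJ M / \<Delta>)) (zzterm M x y))
            (op_scale (complex_of_real (real M / 2 * (1 + real M / \<Delta>)))
               (op_add (at_site (Nloc M) x) (at_site (Nloc M) y)))"
proof -
  have xy: "x \<noteq> y" and \<Delta>: "\<Delta> > 0" and M: "1 \<le> M"
    using assms by auto
  define H where "H \<psi> = Re (qform M (hop M \<Delta> x y) \<psi>)" for \<psi>
  define Z where "Z \<psi> = diag_qform M (zz_diag M x y) \<psi>" for \<psi>
  define N where "N \<psi> = diag_qform M (\<lambda>\<sigma>. (real M - real (\<sigma> x)) + (real M - real (\<sigma> y))) \<psi>" for \<psi>
  have hop: "qform M (hop M \<Delta> x y) \<psi> = complex_of_real (H \<psi>)" for \<psi>
    unfolding H_def qform_hop[OF xy] by simp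
  have zz: "qform M (zzterm M x y) \<psi> = complex_of_real (Z \<psi>)" for \<psi>
    unfolding Z_def by (rule qform_zzterm[OF xy])
  have hxy: "qform M (hxy M \<Delta> x y) \<psi> = complex_of_real (Z \<psi> + H \<psi>)" for \<psi>
    by (simp add: qform_hxy zz hop)
  have Nloc: "qform M (op_add (at_site (Nloc M) x) (at_site (Nloc M) y)) \<psi> = complex_of_real (N \<psi>)" for \<psi>
    unfolding N_def by (rule qform_Nloc_sum)
  have H_bound: "\<bar>H \<psi>\<bar> \<le> 2 * spinJ M / \<Delta> * Z \<psi>" for \<psi>
    using cmod_qform_hop_le[OF xy M \<Delta>, of \<psi>] by (simp add: hop Z_def)
  have hop_lower: "- 2 * spinJ M / \<Delta> * Z \<psi> \<le> H \<psi>"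
    and hop_upper: "H \<psi> \<le> 2 * spinJ M / \<Delta> * Z \<psi>"
    and hxy_lower: "(1 - 2 * spinJ M / \<Delta>) * Z \<psi> \<le> Z \<psi> + H \<psi>"
    and hxy_upper: "Z \<psi> + H \<psi> \<le> (1 + 2 * spinJ M / \<Delta>) * Z \<psi>" for \<psi>
    using H_bound[of \<psi>] by (auto simp: abs_le_iff algebra_simps)
  have zz_le_Nloc: "(1 + 2 * spinJ M / \<Delta>) * Z \<psi> \<le> real M / 2 * (1 + real M / \<Delta>) * N \<psi>" for \<psi>
    using \<Delta> diag_qform_zz_diag_le[of M x y \<psi>]
      mult_left_mono[of "Z \<psi>" "real M / 2 * N \<psi>" "1 + real M / \<Delta>"]
    by (simp add: spinJ_def Z_def N_def ac_simps)
  show ?thesis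
    using op_le_of_real_qforms[OF qform_scale_of_real[OF zz] hop hop_lower]
      op_le_of_real_qforms[OF hop qform_scale_of_real[OF zz] hop_upper]
      op_le_of_real_qforms[OF qform_scale_of_real[OF zz] hxy hxy_lower]
      op_le_of_real_qforms[OF hxy qform_scale_of_real[OF zz] hxy_upper]
      op_le_of_real_qforms[OF qform_scale_of_real[OF zz] qform_scale_of_real[OF Nloc] zz_le_Nloc]
    by blast
qed

end
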